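(* Let $g\ge1$, $n=g+1$, $B\in\mathbb Z^{g\times n}$ with $B_{i,1}=1$, $B_{i,i+1}=-1$ and other entries $0$, and $Q=BB^T$. Let $k\in\{1,\dots,g\}$ and $\mathbf a\in[\mathbf k]$. Then the polytope $B^T(D_{\mathbf a,Q})$ (the convex hull of $\{B^T\mathbf c:\mathbf c\in\mathcal D_{\mathbf a,Q}\}$) is combinatorially equivalent to the hypersimplex $\Delta_{k,n}$.
   Context: $V_Q=\{\mathbf a\in\mathbb R^g:\ \mathbf a^TQ\mathbf a\le(\mathbf a-\mathbf c)^TQ(\mathbf a-\mathbf c)\ \forall\mathbf c\in\mathbb Z^g\}$; for $k=1,\dots,g$, $[\mathbf k]\subset\mathbb R^g$ is the set of vectors with entries in $\{-\tfrac{k}{g+1},\tfrac{g+1-k}{g+1}\}$ having either $k$ or $k-1$ entries equal to $\tfrac{g+1-k}{g+1}$; these are vertices of $V_Q$. For a vertex $\mathbf a$, $\mathcal D_{\mathbf a,Q}=\{\mathbf c\in\mathbb Z^g:\ \mathbf a^TQ\mathbf a=(\mathbf a-\mathbf c)^TQ(\mathbf a-\mathbf c)\}$ and $D_{\mathbf a,Q}$ is its convex hull. The hypersimplex is $\Delta_{k,n}=\mathrm{Conv}\{\sum_{i\in I}\mathbf e_i: I\subset[n],|I|=k\}\subset\mathbb R^n$. *)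

theory Defs
  imports "HOL-Analysis.Analysis"
begin

definition comb_equiv :: "'a::real_vector set \<Rightarrow> 'b::real_vector set \<Rightarrow> bool" where
  "comb_equiv P R \<longleftrightarrow>
     (\<exists>f. bij_betw f {F. F face_of P} {G. G face_of R} \<and>
          (\<forall>F1 F2. F1 face_of P \<longrightarrow> F2 face_of P \<longrightarrow> (F1 \<subseteq> F2 \<longleftrightarrow> f F1 \<subseteq> f F2)))"

text \<open>The matrix B in Z^{g x n}, n = g+1. Rows indexed by 'g, columns by 'g option:
  column None is the first column, column Some i is column i+1.\<close>
definition Bmat :: "real ^ ('g::finite option) ^ 'g" where
  "Bmat = (\<chi> i j. if j = None then 1 else if j = Some i then -1 else 0)"

definition Qmat :: "real ^ 'g ^ ('g::finite)" where
  "Qmat = Bmat ** transpose Bmat"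

definition qform :: "real ^ 'g ^ 'g \<Rightarrow> real ^ ('g::finite) \<Rightarrow> real" where
  "qform Q x = x \<bullet> (Q *v x)"

definition bracket :: "nat \<Rightarrow> (real ^ ('g::finite)) set" where
  "bracket k = {a. (\<forall>i. a $ i \<in> {- real k / real (CARD('g) + 1),
                                   (real (CARD('g) + 1) - real k) / real (CARD('g) + 1)}) \<and>
       card {i. a $ i = (real (CARD('g) + 1) - real k) / real (CARD('g) + 1)} \<in> {k, k - 1}}"

definition Dset :: "real ^ ('g::finite) \<Rightarrow> real ^ 'g ^ 'g \<Rightarrow> (real ^ 'g) set" where
  "Dset a Q = {c. (\<forall>i. c $ i \<in> \<int>) \<and> qform Q a = qform Q (a - c)}"

definition hypersimplex :: "nat \<Rightarrow> (real ^ ('n::finite)) set" where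
  "hypersimplex k = convex hull {(\<chi> i. if i \<in> I then 1 else 0) | I. card I = k}"

end

theory Submission
  imports Defs
begin

text \<open>Since \<open>Q = B B\<^sup>T\<close>, the quadratic form of \<open>Q\<close> is \<open>x \<mapsto> |B\<^sup>T x|\<^sup>2\<close>, and \<open>B\<^sup>T\<close> maps
  \<open>\<int>\<^sup>g\<close> onto the lattice of integer vectors in \<open>\<real>\<^sup>n\<close> with coordinate sum \<open>0\<close>.
  For \<open>a \<in> [k]\<close> every coordinate of \<open>y = B\<^sup>T a\<close> is \<open>q\<close> or \<open>q - 1\<close>, where \<open>q = k/n\<close>;
  as the coordinates of \<open>y\<close> sum to \<open>0\<close>, exactly \<open>k\<close> of them, indexed by \<open>S\<close> say, equal \<open>q - 1\<close>.
  For an integer vector \<open>z\<close> with sum \<open>0\<close> and \<open>w = z + 1\<^sub>S\<close> one gets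
  \<open>|y - z|\<^sup>2 - |y|\<^sup>2 = \<Sum>\<^sub>j w\<^sub>j (w\<^sub>j - 1)\<close>, a sum of nonnegative integers. So \<open>z\<close> lies on
  the sphere through \<open>0\<close> centred at \<open>y\<close> iff \<open>w\<close> is a \<open>0/1\<close> vector, necessarily with \<open>k\<close> ones.
  Thus \<open>B\<^sup>T(\<D>\<^sub>a\<^sub>,\<^sub>Q)\<close> is the vertex set of \<open>\<Delta>\<^sub>k\<^sub>,\<^sub>n\<close> translated by \<open>-1\<^sub>S\<close>, and translations
  preserve face lattices.\<close>

definition indvec :: "'n set \<Rightarrow> real ^ 'n::finite" where
  "indvec S = (\<chi> i. if i \<in> S then 1 else 0)"

lemma indvec_nth [simp]: "indvec S $ i = (if i \<in> S then 1 else 0)"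
  by (simp add: indvec_def)

lemma hypersimplex_eq: "hypersimplex k = convex hull (indvec ` {I. card I = k})"
  by (simp add: hypersimplex_def indvec_def image_Collect)

lemma comb_equiv_translation: "comb_equiv ((+) v ` P) (P :: 'a::real_vector set)"
proof -
  have translate_back: "(+) (- v) ` (+) v ` F = F" for F :: "'a set"
    by (simp add: image_image)
  have "bij_betw (image ((+) (- v))) {F. F face_of (+) v ` P} {G. G face_of P}"
  proof (rule bij_betwI[where g = "image ((+) v)"])
    show "image ((+) (- v)) \<in> {F. F face_of (+) v ` P} \<rightarrow> {G. G face_of P}"
      by (metis (mono_tags, lifting) Pi_I face_of_translation_eq mem_Collect_eq translate_back)
  qed (simp_all add: image_image)
  moreover have "F1 \<subseteq> F2 \<longleftrightarrow> (+) (- v) ` F1 \<subseteq> (+) (- v) ` F2" for F1 F2 :: "'a set"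
    by (simp add: inj_image_subset_iff)
  ultimately show ?thesis
    unfolding comb_equiv_def by blast
qed

lemma sum_UNIV_option: "(\<Sum>j\<in>UNIV. f j) = f None + (\<Sum>i\<in>UNIV. f (Some i))"
  for f :: "'a::finite option \<Rightarrow> 'b::comm_monoid_add"
  by (simp add: UNIV_option_conv sum.reindex)

lemma vector_matrix_mult_diff_distrib: "(x - y) v* A = x v* A - y v* A"
  for A :: "'a::comm_ring_1 ^ 'n ^ 'm"
  by (metis transpose_matrix_vector matrix_vector_mult_diff_distrib)

lemma Ints_le_square:
  fixes w :: real
  assumes "w \<in> \<int>" shows "w \<le> w\<^sup>2"
proof -
  have "w \<le> 0 \<or> 1 \<le> w"
    using assms by (elim Ints_cases) auto
  then show ?thesis
    by (metis order.trans power2_eq_square mult_le_cancel_left1 zero_le_power2 less_le_not_le)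
qed

lemma Ints_zero_one_of_sum_square_minus_self:
  fixes w :: "'a \<Rightarrow> real"
  assumes "finite A" "\<forall>j\<in>A. w j \<in> \<int>" "(\<Sum>j\<in>A. (w j)\<^sup>2 - w j) = 0" "j \<in> A"
  shows "w j = 0 \<or> w j = 1"
proof -
  have "(w j)\<^sup>2 - w j = 0"
    using assms Ints_le_square by (subst (asm) sum_nonneg_eq_0_iff) auto
  then have "w j * (w j - 1) = 0"
    by (simp add: power2_eq_square algebra_simps)
  then show ?thesis
    by simp
qed

lemma two_valued_zero_sum:
  fixes y :: "real ^ 'n::finite"
  assumes "\<forall>j. y $ j \<in> {q, q - 1}" and "(\<Sum>j\<in>UNIV. y $ j) = 0"
  shows "y = vec q - indvec {j. y $ j = q - 1}"
    and "real (card {j. y $ j = q - 1}) = real CARD('n) * q"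
proof -
  define B where "B = {j. y $ j = q - 1}"
  show y: "y = vec q - indvec B"
    using assms(1) by (auto simp: vec_eq_iff B_def)
  have "(\<Sum>j\<in>UNIV. (vec q - indvec B) $ j) = 0"
    using assms(2) by (simp only: y)
  then show "real (card B) = real CARD('n) * q"
    by (simp add: sum_subtractf sum.If_cases)
qed

definition zero_sum_lattice :: "(real ^ 'n::finite) set" where
  "zero_sum_lattice = {z. (\<forall>j. z $ j \<in> \<int>) \<and> (\<Sum>j\<in>UNIV. z $ j) = 0}"

lemma norm_diff_square_zero_sum:
  fixes z :: "real ^ 'n::finite"
  assumes "(\<Sum>j\<in>UNIV. z $ j) = 0"
  shows "(norm (vec q - indvec S - z))\<^sup>2 - (norm (vec q - indvec S))\<^sup>2
           = (\<Sum>j\<in>UNIV. (z $ j + indvec S $ j)\<^sup>2 - (z $ j + indvec S $ j))"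
proof -
  have "(norm (vec q - indvec S - z))\<^sup>2 - (norm (vec q - indvec S))\<^sup>2
      = (\<Sum>j\<in>UNIV. ((z $ j + indvec S $ j)\<^sup>2 - (z $ j + indvec S $ j)) + (1 - 2 * q) * z $ j)"
    unfolding power2_norm_eq_inner inner_vec_def sum_subtractf [symmetric]
    by (rule sum.cong) (auto simp: power2_eq_square algebra_simps)
  also have "\<dots> = (\<Sum>j\<in>UNIV. (z $ j + indvec S $ j)\<^sup>2 - (z $ j + indvec S $ j))"
    using assms by (simp add: sum.distrib flip: sum_distrib_left)
  finally show ?thesis .
qed

lemma zero_sum_lattice_sphere:
  assumes "card S = k"
  shows "{z \<in> zero_sum_lattice. norm (vec q - indvec S - z) = norm (vec q - indvec S)}
           = (\<lambda>T. indvec T - indvec S) ` {T. card T = k}"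
proof (intro equalityI subsetI)
  fix z assume "z \<in> {z \<in> zero_sum_lattice. norm (vec q - indvec S - z) = norm (vec q - indvec S)}"
  then have lattice: "\<forall>j. z $ j \<in> \<int>" and zero_sum: "(\<Sum>j\<in>UNIV. z $ j) = 0"
    and sphere: "norm (vec q - indvec S - z) = norm (vec q - indvec S)"
    by (auto simp: zero_sum_lattice_def)
  define w where "w j = z $ j + indvec S $ j" for j
  have "(\<Sum>j\<in>UNIV. (w j)\<^sup>2 - w j) = 0"
    using norm_diff_square_zero_sum [OF zero_sum, of q S] sphere by (simp add: w_def)
  moreover have "\<forall>j. w j \<in> \<int>"
    using lattice by (simp add: w_def)
  ultimately have "w j = 0 \<or> w j = 1" for j
    by (intro Ints_zero_one_of_sum_square_minus_self [of UNIV]) auto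
  then have "w j = indvec {j. w j = 1} $ j" for j
    by auto
  then have z: "z = indvec {j. w j = 1} - indvec S"
    by (simp add: vec_eq_iff w_def)
  have "real (card {j. w j = 1}) = (\<Sum>j\<in>UNIV. z $ j) + real (card S)"
    by (simp add: z sum_subtractf sum.If_cases)
  then have "card {j. w j = 1} = k"
    using zero_sum assms by simp
  with z show "z \<in> (\<lambda>T. indvec T - indvec S) ` {T. card T = k}"
    by blast
next
  fix z assume "z \<in> (\<lambda>T. indvec T - indvec S) ` {T. card T = k}"
  then obtain T where z: "z = indvec T - indvec S" and "card T = k"
    by blast
  then have zero_sum: "(\<Sum>j\<in>UNIV. z $ j) = 0"
    using assms by (simp add: sum_subtractf sum.If_cases)
  have "(\<Sum>j\<in>UNIV. (z $ j + indvec S $ j)\<^sup>2 - (z $ j + indvec S $ j)) = 0"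
    by (rule sum.neutral) (simp add: z)
  then have "norm (vec q - indvec S - z) = norm (vec q - indvec S)"
    using norm_diff_square_zero_sum [OF zero_sum, of q S] by simp
  with zero_sum show "z \<in> {z \<in> zero_sum_lattice. norm (vec q - indvec S - z) = norm (vec q - indvec S)}"
    by (simp add: zero_sum_lattice_def z)
qed

text \<open>The statement uses \<open>transpose Bmat *v c\<close>, whose simp normal form is \<open>c v* Bmat\<close>.\<close>

lemma vector_matrix_Bmat_None [simp]:
  "(c v* Bmat) $ None = (\<Sum>i\<in>UNIV. c $ i)"
  by (simp add: Bmat_def vector_matrix_mult_def)

lemma vector_matrix_Bmat_Some [simp]: "(c v* Bmat) $ Some j = - c $ j"
proof -
  have "(c v* Bmat) $ Some j = (\<Sum>i\<in>UNIV. c $ i * (if j = i then - 1 else 0))"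
    by (simp add: Bmat_def vector_matrix_mult_def)
  also have "\<dots> = (\<Sum>i\<in>UNIV. if i = j then - c $ i else 0)"
    by (rule sum.cong) auto
  finally show ?thesis
    by simp
qed

lemma sum_vector_matrix_Bmat: "(\<Sum>j\<in>UNIV. (c v* Bmat) $ j) = 0"
  by (simp add: sum_UNIV_option sum_negf)

lemma qform_Qmat: "qform Qmat x = (norm (x v* Bmat))\<^sup>2"
  by (simp add: qform_def Qmat_def power2_norm_eq_inner dot_lmul_matrix
      flip: matrix_vector_mul_assoc)

lemma Bmat_image_lattice: "(\<lambda>c. c v* Bmat) ` {c. \<forall>i. c $ i \<in> \<int>} = zero_sum_lattice"
proof (intro equalityI subsetI)
  fix z assume "z \<in> (\<lambda>c. c v* Bmat) ` {c. \<forall>i. c $ i \<in> \<int>}"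
  then obtain c where c: "\<forall>i. c $ i \<in> \<int>" and z: "z = c v* Bmat"
    by blast
  have "z $ j \<in> \<int>" for j
    using c by (cases j) (auto simp: z Ints_sum)
  then show "z \<in> zero_sum_lattice"
    by (simp add: zero_sum_lattice_def z sum_vector_matrix_Bmat)
next
  fix z :: "real ^ 'a option" assume "z \<in> zero_sum_lattice"
  then have z: "\<forall>j. z $ j \<in> \<int>" "z $ None + (\<Sum>i\<in>UNIV. z $ Some i) = 0"
    by (simp_all add: zero_sum_lattice_def sum_UNIV_option)
  define c where "c = (\<chi> i. - z $ Some i)"
  have "c v* Bmat = z"
    unfolding vec_eq_iff
  proof
    show "(c v* Bmat) $ j = z $ j" for j
      using z(2) by (cases j) (simp_all add: c_def sum_negf add_eq_0_iff)
  qed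
  moreover have "\<forall>i. c $ i \<in> \<int>"
    using z(1) by (simp add: c_def)
  ultimately show "z \<in> (\<lambda>c. c v* Bmat) ` {c. \<forall>i. c $ i \<in> \<int>}"
    by blast
qed

lemma Bmat_image_Dset:
  "(\<lambda>c. c v* Bmat) ` Dset a Qmat
     = {z \<in> zero_sum_lattice. norm (a v* Bmat - z) = norm (a v* Bmat)}"
proof -
  have "Dset a Qmat = {c \<in> {c. \<forall>i. c $ i \<in> \<int>}. norm (a v* Bmat - c v* Bmat) = norm (a v* Bmat)}"
    by (auto simp: Dset_def qform_Qmat vector_matrix_mult_diff_distrib)
  then show ?thesis
    by (auto simp flip: Bmat_image_lattice)
qed

lemma bracket_eq_indvec:
  fixes a :: "real ^ 'g::finite"
  assumes "a \<in> bracket k"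
  obtains A where "card A = k \<or> card A = k - 1"
    and "a = indvec A - vec (real k / real (CARD('g) + 1))"
proof
  define q where "q = real k / real (CARD('g) + 1)"
  have "(real (CARD('g) + 1) - real k) / real (CARD('g) + 1) = 1 - q"
    by (simp add: q_def field_simps)
  then have "a $ i = - q \<or> a $ i = 1 - q" and "card {i. a $ i = 1 - q} \<in> {k, k - 1}" for i
    using assms by (auto simp: bracket_def q_def)
  then show "card {i. a $ i = 1 - q} = k \<or> card {i. a $ i = 1 - q} = k - 1"
    and "a = indvec {i. a $ i = 1 - q} - vec q"
    by (auto simp: vec_eq_iff)
qed

lemma vector_matrix_Bmat_two_valued:
  fixes A :: "'g::finite set" and k :: nat
  defines "q \<equiv> real k / real (CARD('g) + 1)"
  assumes "card A = k \<or> card A = k - 1"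
  shows "((indvec A - vec q) v* Bmat) $ j \<in> {q, q - 1}"
proof (cases j)
  case None
  have "((indvec A - vec q) v* Bmat) $ None = real (card A) - real CARD('g) * q"
    by (simp add: sum_subtractf sum.If_cases)
  also have "real CARD('g) * q = real k - q"
    by (simp add: q_def field_simps)
  finally show ?thesis
    using assms(2) None by (cases "card A = k") auto
next
  case (Some i)
  then show ?thesis
    by simp
qed

lemma Bmat_image_bracket:
  fixes a :: "real ^ 'g::finite"
  assumes "a \<in> bracket k"
  obtains S where "card S = k" and "a v* Bmat = vec (real k / real (CARD('g) + 1)) - indvec S"
proof -
  define q where "q = real k / real (CARD('g) + 1)"
  obtain A where card: "card A = k \<or> card A = k - 1" and a: "a = indvec A - vec q"
    using bracket_eq_indvec [OF assms] unfolding q_def by blast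
  have "\<forall>j. (a v* Bmat) $ j \<in> {q, q - 1}"
    using vector_matrix_Bmat_two_valued [OF card] unfolding a q_def by blast
  note two_valued = two_valued_zero_sum [OF this sum_vector_matrix_Bmat]
  have "card {j. (a v* Bmat) $ j = q - 1} = k"
    using two_valued(2) by (simp add: q_def)
  then show ?thesis
    using two_valued(1) unfolding q_def by (rule that)
qed

theorem theorem3p5:
  fixes k :: nat and a :: "real ^ ('g::finite)"
  assumes "1 \<le> k" and "k \<le> CARD('g)"
    and "a \<in> bracket k"
  shows "comb_equiv
           (convex hull ((\<lambda>c. transpose Bmat *v c) ` Dset a (Qmat :: real ^ 'g ^ 'g)))
           (hypersimplex k :: (real ^ ('g option)) set)"
proof -
  obtain S where "card S = k" and a: "a v* Bmat = vec (real k / real (CARD('g) + 1)) - indvec S"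
    using Bmat_image_bracket [OF assms(3)] .
  have image: "(\<lambda>c. c v* Bmat) ` Dset a Qmat = (+) (- indvec S) ` indvec ` {T. card T = k}"
    unfolding Bmat_image_Dset a zero_sum_lattice_sphere [OF \<open>card S = k\<close>]
    by (auto simp: image_image)
  show ?thesis
    unfolding transpose_matrix_vector image hypersimplex_eq convex_hull_translation
    by (rule comb_equiv_translation)
qed

end
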